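(* Let $\Gamma$ be a geometrically finite Fuchsian group such that $\infty\notin\widehat{\mathbb{R}}_{\mathrm{st}}$. Suppose $\Gamma$ is not conjugate in $\mathrm{PSL}_2(\mathbb{R})$ to any group generated by $z\mapsto -1/z$ and $z\mapsto \lambda z$ with $\lambda>1$, and suppose $\Lambda(\Gamma)$ consists of more than one point. For $g\in\Gamma\setminus\Gamma_\infty$ let $\mathscr{W}(g)\subseteq\mathbb{R}$ be the open interval whose endpoints are the two endpoints in $\mathbb{R}$ of the isometric sphere $\mathrm{I}(g)$. Then for every $g\in\Gamma\setminus\Gamma_\infty$ we have $\mathscr{W}(g)\cap\Lambda(\Gamma)\neq\varnothing$.
   Context: A Fuchsian group is a discrete subgroup of $\mathrm{PSL}_2(\mathbb{R})$ acting on the upper half-plane $\mathbb{H}$ and on $\widehat{\mathbb{R}}=\mathbb{R}\cup\{\infty\}$ by linear fractional transformations. $\Lambda(\Gamma)$ is its limit set and $\widehat{\mathbb{R}}_{\mathrm{st}}$ is $\Lambda(\Gamma)$ with all parabolic fixed points of $\Gamma$ removed. $\Gamma_\infty$ denotes the stabilizer of $\infty$ in $\Gamma$ (trivial or generated by a parabolic translation $z\mapsto z+\lambda$, under the assumption $\infty\notin\widehat{\mathbb{R}}_{\mathrm{st}}$). For $g=\begin{bmatrix}a&b\\c&d\end{bmatrix}\in\Gamma\setminus\Gamma_\infty$ (so $c\ne0$), the isometric sphere is $\mathrm{I}(g)=\{z\in\mathbb{H}: |z+\tfrac{d}{c}|=\tfrac{1}{|c|}\}$; thus $\mathscr{W}(g)=(-\tfrac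 dc-\tfrac1{|c|},\,-\tfrac dc+\tfrac1{|c|})$. *)

theory Defs
  imports "HOL-Analysis.Analysis"
begin

text \<open>A matrix [a b; c d] is the tuple (a,b,c,d).\<close>
type_synonym mat2 = "real \<times> real \<times> real \<times> real"

definition mmul :: "mat2 \<Rightarrow> mat2 \<Rightarrow> mat2" where
  "mmul M N = (case M of (a,b,c,d) \<Rightarrow> case N of (a',b',c',d') \<Rightarrow>
      (a*a' + b*c', a*b' + b*d', c*a' + d*c', c*b' + d*d'))"

definition mdet :: "mat2 \<Rightarrow> real" where
  "mdet M = (case M of (a,b,c,d) \<Rightarrow> a*d - b*c)"

definition mid :: mat2 where "mid = (1,0,0,1)"

definition mneg :: "mat2 \<Rightarrow> mat2" where
  "mneg M = (case M of (a,b,c,d) \<Rightarrow> (-a,-b,-c,-d))"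

text \<open>Inverse of a determinant-one matrix.\<close>
definition minv :: "mat2 \<Rightarrow> mat2" where
  "minv M = (case M of (a,b,c,d) \<Rightarrow> (d,-b,-c,a))"

definition entry_c :: "mat2 \<Rightarrow> real" where "entry_c M = (case M of (a,b,c,d) \<Rightarrow> c)"
definition entry_d :: "mat2 \<Rightarrow> real" where "entry_d M = (case M of (a,b,c,d) \<Rightarrow> d)"

definition mtrace :: "mat2 \<Rightarrow> real" where
  "mtrace M = (case M of (a,b,c,d) \<Rightarrow> a + d)"

definition mob :: "mat2 \<Rightarrow> complex \<Rightarrow> complex" where
  "mob M z = (case M of (a,b,c,d) \<Rightarrow>
      (of_real a * z + of_real b) / (of_real c * z + of_real d))"

datatype extR = Fin real | Infty

definition ext_act :: "mat2 \<Rightarrow> extR \<Rightarrow> extR" where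
  "ext_act M p = (case M of (a,b,c,d) \<Rightarrow>
     (case p of
        Fin x \<Rightarrow> (if c*x + d = 0 then Infty else Fin ((a*x + b) / (c*x + d)))
      | Infty \<Rightarrow> (if c = 0 then Infty else Fin (a / c))))"

text \<open>A subgroup of PSL(2,R) is represented by its full preimage in SL(2,R),
  i.e. a subgroup of SL(2,R) containing -I.\<close>
definition psl_subgroup :: "mat2 set \<Rightarrow> bool" where
  "psl_subgroup G \<longleftrightarrow>
     (\<forall>g\<in>G. mdet g = 1) \<and> mid \<in> G \<and> mneg mid \<in> G \<and>
     (\<forall>g\<in>G. \<forall>h\<in>G. mmul g h \<in> G) \<and> (\<forall>g\<in>G. minv g \<in> G)"

definition fuchsian :: "mat2 set \<Rightarrow> bool" where
  "fuchsian G \<longleftrightarrow> psl_subgroup G \<and> (\<forall>g\<in>G. g isolated_in G)"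

definition orbit :: "mat2 set \<Rightarrow> complex \<Rightarrow> complex set" where
  "orbit G z = (\<lambda>g. mob g z) ` G"

text \<open>A real point x is an accumulation point iff it is a limit point of the orbit in \<open>\<complex>\<close>;
  \<open>\<infinity>\<close> is an accumulation point iff the orbit is unbounded.\<close>
definition limit_set :: "mat2 set \<Rightarrow> extR set" where
  "limit_set G =
     {Fin x | x. \<exists>z. 0 < Im z \<and> complex_of_real x islimpt orbit G z} \<union>
     {Infty | _::unit. \<exists>z. 0 < Im z \<and> \<not> bounded (orbit G z)}"

definition parabolic :: "mat2 \<Rightarrow> bool" where
  "parabolic g \<longleftrightarrow> \<bar>mtrace g\<bar> = 2 \<and> g \<noteq> mid \<and> g \<noteq> mneg mid"

definition parabolic_fixed_point :: "mat2 set \<Rightarrow> extR \<Rightarrow> bool" where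
  "parabolic_fixed_point G p \<longleftrightarrow> (\<exists>g\<in>G. parabolic g \<and> ext_act g p = p)"

definition Rst :: "mat2 set \<Rightarrow> extR set" where
  "Rst G = {p \<in> limit_set G. \<not> parabolic_fixed_point G p}"

definition hdist :: "complex \<Rightarrow> complex \<Rightarrow> real" where
  "hdist z w = arcosh (1 + (cmod (z - w))\<^sup>2 / (2 * Im z * Im w))"

definition dirichlet_region :: "mat2 set \<Rightarrow> complex \<Rightarrow> complex set" where
  "dirichlet_region F p = {z. 0 < Im z \<and> (\<forall>g\<in>F. hdist z p \<le> hdist z (mob g p))}"

text \<open>Geometrically finite: some Dirichlet fundamental domain (centre p not fixed by any
  non-identity element) is a finite-sided polygon, i.e. it is cut out by finitely many of
  its defining half-planes.\<close>
definition geometrically_finite :: "mat2 set \<Rightarrow> bool" where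
  "geometrically_finite G \<longleftrightarrow>
     (\<exists>p. 0 < Im p \<and> (\<forall>g\<in>G. mob g p = p \<longrightarrow> g = mid \<or> g = mneg mid) \<and>
          (\<exists>F. F \<subseteq> G \<and> finite F \<and> dirichlet_region G p = dirichlet_region F p))"

inductive_set gen_group :: "mat2 set \<Rightarrow> mat2 set" for X where
  gen_id: "mid \<in> gen_group X"
| gen_base: "x \<in> X \<Longrightarrow> x \<in> gen_group X"
| gen_mul: "x \<in> gen_group X \<Longrightarrow> y \<in> gen_group X \<Longrightarrow> mmul x y \<in> gen_group X"
| gen_inv: "x \<in> gen_group X \<Longrightarrow> minv x \<in> gen_group X"

text \<open>Preimage in SL(2,R) of the subgroup of PSL(2,R) generated by
  \<open>z \<mapsto> -1/z\<close> and \<open>z \<mapsto> \<lambda>z\<close>.\<close>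
definition special_group :: "real \<Rightarrow> mat2 set" where
  "special_group lam = gen_group {(0,-1,1,0), (sqrt lam, 0, 0, 1 / sqrt lam), mneg mid}"

definition psl_conjugate :: "mat2 set \<Rightarrow> mat2 set \<Rightarrow> bool" where
  "psl_conjugate G H \<longleftrightarrow> (\<exists>h. mdet h = 1 \<and> G = (\<lambda>g. mmul (mmul h g) (minv h)) ` H)"

text \<open>\<open>\<W>(g)\<close>: the open interval spanned by the isometric sphere of g (c \<noteq> 0).\<close>
definition W_int :: "mat2 \<Rightarrow> real set" where
  "W_int g = {- entry_d g / entry_c g - 1 / \<bar>entry_c g\<bar> <..< - entry_d g / entry_c g + 1 / \<bar>entry_c g\<bar>}"

end

theory Submission
  imports Defs
begin

text \<open>
  Write \<open>g = (a, b, c, d)\<close> with \<open>c > 0\<close>, so that \<open>W(g) = {x. \<bar>c x + d\<bar> < 1}\<close>. If \<open>\<infinity>\<close>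
  is a limit point, so is its image \<open>-d/c\<close> under \<open>g\<^sup>-\<^sup>1\<close>, the centre of \<open>W(g)\<close>. Otherwise
  suppose that the limit set misses \<open>W(g)\<close>. In the coordinate \<open>s = c x + d\<close> it becomes a set
  \<open>T\<close> of reals with \<open>\<bar>s\<bar> \<ge> 1\<close>, and its invariance under \<open>g\<^sup>-\<^sup>1\<close> becomes invariance under
  \<open>s \<mapsto> 1 / (\<tau> - s)\<close> with \<open>\<tau> = a + d\<close>. A monotonicity argument shows that such a set
  with two points forces \<open>\<tau> = 0\<close> and \<open>T \<subseteq> {-1, 1}\<close>: the limit set consists of the two
  points interchanged by the involution \<open>g\<close>. Conjugating them to \<open>0\<close> and \<open>\<infinity>\<close>, every element
  of \<open>\<Gamma>\<close> becomes diagonal or antidiagonal, discreteness makes the diagonal part cyclic, and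
  \<open>\<Gamma>\<close> turns out to be conjugate to the excluded group generated by \<open>z \<mapsto> -1/z\<close> and
  \<open>z \<mapsto> \<mu>\<^sup>2 z\<close>.
\<close>

lemma mmul_simp:
  "mmul (a, b, c, d) (a', b', c', d') = (a*a' + b*c', a*b' + b*d', c*a' + d*c', c*b' + d*d')"
  by (simp add: mmul_def)

lemma mdet_simp: "mdet (a, b, c, d) = a*d - b*c"
  by (simp add: mdet_def)

lemma minv_simp: "minv (a, b, c, d) = (d, -b, -c, a)"
  by (simp add: minv_def)

lemma mneg_simp: "mneg (a, b, c, d) = (-a, -b, -c, -d)"
  by (simp add: mneg_def)

lemma entry_simps: "entry_c (a, b, c, d) = c" "entry_d (a, b, c, d) = d"
  by (simp_all add: entry_c_def entry_d_def)

lemma mob_simp: "mob (a, b, c, d) z = (of_real a * z + of_real b) / (of_real c * z + of_real d)"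
  by (simp add: mob_def)

lemma ext_act_simps:
  "ext_act (a, b, c, d) (Fin x) = (if c*x + d = 0 then Infty else Fin ((a*x + b) / (c*x + d)))"
  "ext_act (a, b, c, d) Infty = (if c = 0 then Infty else Fin (a / c))"
  by (simp_all add: ext_act_def)

lemmas mat2_simps = mmul_simp mdet_simp minv_simp mneg_simp entry_simps mob_simp ext_act_simps mid_def

lemma mmul_assoc: "mmul (mmul A B) C = mmul A (mmul B C)"
  by (cases A; cases B; cases C) (simp add: mat2_simps algebra_simps)

lemma mmul_mid [simp]: "mmul mid A = A" "mmul A mid = A"
  by (cases A; simp add: mat2_simps)+

lemma minv_mmul_cancel: "mdet A = 1 \<Longrightarrow> mmul (minv A) A = mid"
  by (cases A) (auto simp: mat2_simps algebra_simps)

lemma mmul_minv_cancel: "mdet A = 1 \<Longrightarrow> mmul A (minv A) = mid"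
  by (cases A) (auto simp: mat2_simps algebra_simps)

lemma mdet_mmul: "mdet (mmul A B) = mdet A * mdet B"
  by (cases A; cases B) (simp add: mat2_simps algebra_simps)

lemma mdet_minv: "mdet (minv A) = mdet A"
  by (cases A) (simp add: mat2_simps algebra_simps)

lemma minv_mmul: "minv (mmul A B) = mmul (minv B) (minv A)"
  by (cases A; cases B) (simp add: mat2_simps algebra_simps)

lemma minv_minv [simp]: "minv (minv A) = A"
  by (cases A) (simp add: mat2_simps)

lemma mneg_eq_mmul: "mneg A = mmul (mneg mid) A"
  by (cases A) (simp add: mat2_simps)

lemma mmul_cont [continuous_intros]:
  assumes "continuous F f" "continuous F g"
  shows "continuous F (\<lambda>x. mmul (f x) (g x))"
proof -
  have "mmul M N = (fst M * fst N + fst (snd M) * fst (snd (snd N)),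
      fst M * fst (snd N) + fst (snd M) * snd (snd (snd N)),
      fst (snd (snd M)) * fst N + snd (snd (snd M)) * fst (snd (snd N)),
      fst (snd (snd M)) * fst (snd N) + snd (snd (snd M)) * snd (snd (snd N)))" for M N
    by (cases M; cases N) (simp add: mmul_simp)
  then show ?thesis
    by (simp only:) (intro continuous_intros assms)
qed

lemma mob_denom_nonzero:
  assumes "mdet (a, b, c, d) = 1" "0 < Im z"
  shows "of_real c * z + of_real d \<noteq> 0"
proof
  assume denom: "of_real c * z + of_real d = 0"
  have "Im (of_real c * z + of_real d) = c * Im z"
    by simp
  with denom have "c * Im z = 0"
    by simp
  then have "c = 0"
    using assms(2) by simp
  with denom assms(1) show False
    by (simp add: mdet_simp)
qed

lemma Im_mob:
  assumes "mdet (a, b, c, d) = 1"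
  shows "Im (mob (a, b, c, d) z) = Im z / (cmod (of_real c * z + of_real d))\<^sup>2"
proof -
  have "Im (of_real a * z + of_real b) * Re (of_real c * z + of_real d)
      - Re (of_real a * z + of_real b) * Im (of_real c * z + of_real d) = (a*d - b*c) * Im z"
    by (simp add: algebra_simps)
  then show ?thesis
    using assms by (simp add: mat2_simps Im_divide')
qed

lemma Im_mob_pos:
  assumes "mdet M = 1" "0 < Im z"
  shows "0 < Im (mob M z)"
  using assms Im_mob mob_denom_nonzero by (cases M) auto

lemma mob_mmul:
  assumes "mdet B = 1" "0 < Im z"
  shows "mob (mmul A B) z = mob A (mob B z)"
proof -
  obtain a b c d where A: "A = (a, b, c, d)" by (cases A)
  obtain a' b' c' d' where B: "B = (a', b', c', d')" by (cases B)
  define N D where "N = of_real a' * z + of_real b'" and "D = of_real c' * z + of_real d'"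
  have "D \<noteq> 0"
    using mob_denom_nonzero[of a' b' c' d' z] assms B D_def by simp
  have "of_real a * (N / D) + of_real b = (of_real a * N + of_real b * D) / D"
    and "of_real c * (N / D) + of_real d = (of_real c * N + of_real d * D) / D"
    using \<open>D \<noteq> 0\<close> by (simp_all add: field_simps)
  then have "mob A (N / D) = (of_real a * N + of_real b * D) / (of_real c * N + of_real d * D)"
    using \<open>D \<noteq> 0\<close> by (simp add: A mob_simp)
  also have "\<dots> = mob (mmul A B) z"
    by (simp add: A B N_def D_def mat2_simps algebra_simps)
  finally show ?thesis
    by (simp add: B N_def D_def mob_simp)
qed

text \<open>\<open>proj\<close> reads homogeneous coordinates; \<open>ext_act\<close> is the projectivisation of \<open>mvec\<close>.\<close>

definition proj :: "real \<times> real \<Rightarrow> extR" where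
  "proj v = (case v of (u, w) \<Rightarrow> if w = 0 then Infty else Fin (u / w))"

definition mvec :: "mat2 \<Rightarrow> real \<times> real \<Rightarrow> real \<times> real" where
  "mvec M v = (case M of (a, b, c, d) \<Rightarrow> case v of (u, w) \<Rightarrow> (a*u + b*w, c*u + d*w))"

lemma proj_surj: "\<exists>v. v \<noteq> (0, 0) \<and> p = proj v"
proof (cases p)
  case (Fin x)
  then show ?thesis
    by (intro exI[of _ "(x, 1)"]) (simp add: proj_def)
next
  case Infty
  then show ?thesis
    by (intro exI[of _ "(1, 0)"]) (simp add: proj_def)
qed

lemma ext_act_proj:
  assumes "v \<noteq> (0, 0)"
  shows "ext_act M (proj v) = proj (mvec M v)"
proof (cases M; cases v)
  fix a b c d u w
  assume M: "M = (a, b, c, d)" and v: "v = (u, w)"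
  show ?thesis
  proof (cases "w = 0")
    case True
    then show ?thesis
      using assms by (simp add: M v proj_def mvec_def ext_act_simps)
  next
    case False
    then have "a*(u/w) + b = (a*u + b*w) / w" and "c*(u/w) + d = (c*u + d*w) / w"
      by (simp_all add: field_simps)
    with False show ?thesis
      by (simp add: M v proj_def mvec_def ext_act_simps)
  qed
qed

lemma mvec_mmul: "mvec (mmul A B) v = mvec A (mvec B v)"
  by (cases A; cases B; cases v) (simp add: mvec_def mmul_simp algebra_simps)

lemma mvec_eq_0_iff: "mdet M \<noteq> 0 \<Longrightarrow> mvec M v = (0, 0) \<longleftrightarrow> v = (0, 0)"
proof (cases M; cases v)
  fix a b c d u w
  assume "mdet M \<noteq> 0" "M = (a, b, c, d)" "v = (u, w)"
  moreover have "(a*d - b*c) * u = d*(a*u + b*w) - b*(c*u + d*w)"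
    and "(a*d - b*c) * w = a*(c*u + d*w) - c*(a*u + b*w)"
    by (simp_all add: algebra_simps)
  ultimately show ?thesis
    by (auto simp: mvec_def mdet_simp)
qed

lemma ext_act_mmul: "mdet B \<noteq> 0 \<Longrightarrow> ext_act (mmul A B) p = ext_act A (ext_act B p)"
  using proj_surj[of p] ext_act_proj mvec_mmul mvec_eq_0_iff by metis

lemma ext_act_mid [simp]: "ext_act mid p = p"
  by (cases p) (simp_all add: mid_def ext_act_simps)

section \<open>Invariance of the limit set\<close>

lemma psl_subgroup_mdet: "psl_subgroup G \<Longrightarrow> g \<in> G \<Longrightarrow> mdet g = 1"
  by (simp add: psl_subgroup_def)

lemma psl_subgroup_mid: "psl_subgroup G \<Longrightarrow> mid \<in> G"
  by (simp add: psl_subgroup_def)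

lemma psl_subgroup_mmul: "psl_subgroup G \<Longrightarrow> g \<in> G \<Longrightarrow> h \<in> G \<Longrightarrow> mmul g h \<in> G"
  by (simp add: psl_subgroup_def)

lemma psl_subgroup_minv: "psl_subgroup G \<Longrightarrow> g \<in> G \<Longrightarrow> minv g \<in> G"
  by (simp add: psl_subgroup_def)

lemma psl_subgroup_mneg: "psl_subgroup G \<Longrightarrow> g \<in> G \<Longrightarrow> mneg g \<in> G"
  unfolding mneg_eq_mmul[of g] by (simp add: psl_subgroup_def)

lemma orbit_Im_pos: "psl_subgroup G \<Longrightarrow> 0 < Im z \<Longrightarrow> w \<in> orbit G z \<Longrightarrow> 0 < Im w"
  unfolding orbit_def using Im_mob_pos psl_subgroup_mdet by blast

lemma mob_orbit:
  assumes "psl_subgroup G" "0 < Im z" "w \<in> orbit G z" "g \<in> G"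
  shows "mob g w \<in> orbit G z"
proof -
  obtain h where "h \<in> G" "w = mob h z"
    using assms(3) unfolding orbit_def by auto
  then have "mob g w = mob (mmul g h) z"
    using mob_mmul assms(1,2) psl_subgroup_mdet by metis
  then show ?thesis
    using psl_subgroup_mmul[OF assms(1,4) \<open>h \<in> G\<close>] unfolding orbit_def by auto
qed

lemma real_islimpt_orbit_iff:
  assumes "psl_subgroup G" "0 < Im z"
  shows "complex_of_real x islimpt orbit G z \<longleftrightarrow> (\<exists>f. (\<forall>n. f n \<in> orbit G z) \<and> f \<longlonglongrightarrow> complex_of_real x)"
proof -
  have "w \<noteq> complex_of_real x" if "w \<in> orbit G z" for w
    using orbit_Im_pos[OF assms that] by auto
  then show ?thesis
    unfolding islimpt_sequential by blast
qed

lemma limit_set_Fin_image: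
  assumes G: "psl_subgroup G" and g: "(a, b, c, d) \<in> G"
    and x: "Fin x \<in> limit_set G" and nonpole: "c*x + d \<noteq> 0"
  shows "Fin ((a*x + b) / (c*x + d)) \<in> limit_set G"
proof -
  obtain z where z: "0 < Im z" "complex_of_real x islimpt orbit G z"
    using x unfolding limit_set_def by auto
  then obtain f where f: "\<And>n. f n \<in> orbit G z" "f \<longlonglongrightarrow> complex_of_real x"
    using real_islimpt_orbit_iff[OF G] by blast
  have "of_real c * complex_of_real x + of_real d \<noteq> 0"
    using nonpole by (metis of_real_add of_real_eq_0_iff of_real_mult)
  then have "(\<lambda>n. mob (a, b, c, d) (f n)) \<longlonglongrightarrow> mob (a, b, c, d) (complex_of_real x)"
    unfolding mob_simp by (intro tendsto_intros f(2))
  moreover have "mob (a, b, c, d) (complex_of_real x) = complex_of_real ((a*x + b) / (c*x + d))"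
    by (simp add: mob_simp)
  moreover have "mob (a, b, c, d) (f n) \<in> orbit G z" for n
    using mob_orbit[OF G z(1) f(1) g] .
  ultimately have "complex_of_real ((a*x + b) / (c*x + d)) islimpt orbit G z"
    using real_islimpt_orbit_iff[OF G z(1)] by metis
  then show ?thesis
    using z(1) unfolding limit_set_def by auto
qed

lemma limit_set_Infty_of_pole:
  assumes G: "psl_subgroup G" and g: "(a, b, c, d) \<in> G"
    and x: "Fin x \<in> limit_set G" and pole: "c*x + d = 0"
  shows "Infty \<in> limit_set G"
proof -
  obtain z where z: "0 < Im z" "complex_of_real x islimpt orbit G z"
    using x unfolding limit_set_def by auto
  then obtain f where f: "\<And>n. f n \<in> orbit G z" "f \<longlonglongrightarrow> complex_of_real x"
    using real_islimpt_orbit_iff[OF G] by blast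
  have "\<not> bounded (orbit G z)"
  proof
    assume "bounded (orbit G z)"
    then obtain B where B: "\<And>w. w \<in> orbit G z \<Longrightarrow> norm w \<le> B"
      unfolding bounded_iff by auto
    have "norm (of_real a * f n + of_real b) \<le> B * norm (of_real c * f n + of_real d)" for n
    proof -
      have "of_real c * f n + of_real d \<noteq> 0"
        using mob_denom_nonzero orbit_Im_pos[OF G z(1) f(1)] psl_subgroup_mdet[OF G g] by blast
      moreover have "norm (mob (a, b, c, d) (f n)) \<le> B"
        using B mob_orbit[OF G z(1) f(1) g] by blast
      ultimately show ?thesis
        by (simp add: mob_simp norm_divide divide_le_eq)
    qed
    moreover have "(\<lambda>n. norm (of_real a * f n + of_real b)) \<longlonglongrightarrow> norm (complex_of_real (a*x + b))"
      and "(\<lambda>n. B * norm (of_real c * f n + of_real d)) \<longlonglongrightarrow> B * norm (complex_of_real (c*x + d))"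
      by (auto intro!: tendsto_intros f(2))
    ultimately have "norm (complex_of_real (a*x + b)) \<le> B * norm (complex_of_real (c*x + d))"
      by (intro tendsto_le[OF sequentially_bot]) auto
    then have "a*x + b = 0"
      using pole by (simp del: of_real_add of_real_mult)
    moreover have "(a*x + b)*d - (c*x + d)*b = (a*d - b*c)*x"
      by (simp add: algebra_simps)
    ultimately show False
      using pole psl_subgroup_mdet[OF G g] by (auto simp: mdet_simp)
  qed
  then show ?thesis
    using z(1) unfolding limit_set_def by auto
qed

lemma dist_mob_image_of_Infty:
  assumes "mdet (a, b, c, d) = 1" "c \<noteq> 0" "of_real c * w + of_real d \<noteq> 0"
  shows "dist (mob (a, b, c, d) w) (complex_of_real (a / c))
    = 1 / (\<bar>c\<bar> * norm (of_real c * w + of_real d))"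
proof -
  have "mob (a, b, c, d) w - complex_of_real (a / c)
      = - complex_of_real (a*d - b*c) / (of_real c * (of_real c * w + of_real d))"
    using assms(2,3) by (simp add: mob_simp field_simps)
  then have "dist (mob (a, b, c, d) w) (complex_of_real (a / c))
      = norm (complex_of_real (a*d - b*c)) / norm (of_real c * (of_real c * w + of_real d))"
    by (simp add: dist_norm norm_divide del: of_real_diff)
  also have "\<dots> = 1 / (\<bar>c\<bar> * norm (of_real c * w + of_real d))"
    using assms(1) by (simp add: norm_mult mdet_simp)
  finally show ?thesis .
qed

lemma limit_set_Fin_of_Infty:
  assumes G: "psl_subgroup G" and g: "(a, b, c, d) \<in> G"
    and inf: "Infty \<in> limit_set G" and "c \<noteq> 0"
  shows "Fin (a / c) \<in> limit_set G"
proof -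
  obtain z where z: "0 < Im z" "\<not> bounded (orbit G z)"
    using inf unfolding limit_set_def by auto
  have "complex_of_real (a / c) islimpt orbit G z"
    unfolding islimpt_approachable
  proof (intro allI impI)
    fix e :: real
    assume "e > 0"
    obtain w where w: "w \<in> orbit G z" "norm w > (1 / (\<bar>c\<bar> * e) + \<bar>d\<bar>) / \<bar>c\<bar>"
      using z(2) unfolding bounded_iff by (meson not_le)
    have "norm (of_real c * w + of_real d) \<ge> \<bar>c\<bar> * norm w - \<bar>d\<bar>"
      using norm_triangle_ineq2[of "of_real c * w" "- of_real d"] by (simp add: norm_mult)
    moreover have "\<bar>c\<bar> * norm w > 1 / (\<bar>c\<bar> * e) + \<bar>d\<bar>"
      using w(2) \<open>c \<noteq> 0\<close> by (simp add: field_simps)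
    ultimately have "1 / (\<bar>c\<bar> * e) < norm (of_real c * w + of_real d)"
      by linarith
    then have "1 / e < \<bar>c\<bar> * norm (of_real c * w + of_real d)"
      using \<open>c \<noteq> 0\<close> \<open>e > 0\<close> by (simp add: field_simps)
    then have "1 / (\<bar>c\<bar> * norm (of_real c * w + of_real d)) < e"
      using less_imp_inverse_less \<open>e > 0\<close> by (fastforce simp: inverse_eq_divide)
    moreover have "of_real c * w + of_real d \<noteq> 0"
      using mob_denom_nonzero orbit_Im_pos[OF G z(1) w(1)] psl_subgroup_mdet[OF G g] by blast
    ultimately have "dist (mob (a, b, c, d) w) (complex_of_real (a / c)) < e"
      using dist_mob_image_of_Infty psl_subgroup_mdet[OF G g] \<open>c \<noteq> 0\<close> by simp
    moreover have "mob (a, b, c, d) w \<in> orbit G z"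
      using mob_orbit[OF G z(1) w(1) g] .
    moreover have "mob (a, b, c, d) w \<noteq> complex_of_real (a / c)"
      using orbit_Im_pos[OF G z(1) \<open>mob (a, b, c, d) w \<in> orbit G z\<close>] by auto
    ultimately show "\<exists>w'\<in>orbit G z. w' \<noteq> complex_of_real (a / c) \<and> dist w' (complex_of_real (a / c)) < e"
      by blast
  qed
  then show ?thesis
    using z(1) unfolding limit_set_def by auto
qed

lemma limit_set_invariant:
  assumes G: "psl_subgroup G" and "g \<in> G" and p: "p \<in> limit_set G"
  shows "ext_act g p \<in> limit_set G"
proof -
  obtain a b c d where g: "g = (a, b, c, d)"
    by (cases g)
  show ?thesis
  proof (cases p)
    case (Fin x)
    then show ?thesis
      using limit_set_Fin_image limit_set_Infty_of_pole G \<open>g \<in> G\<close> p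
      by (auto simp: g ext_act_simps)
  next
    case Infty
    then show ?thesis
      using limit_set_Fin_of_Infty G \<open>g \<in> G\<close> p by (auto simp: g ext_act_simps)
  qed
qed

lemma limit_set_finite_group: "finite G \<Longrightarrow> limit_set G = {}"
  by (auto simp: limit_set_def orbit_def islimpt_finite finite_imp_bounded)

definition conjm :: "mat2 \<Rightarrow> mat2 \<Rightarrow> mat2" where
  "conjm h g = mmul (mmul h g) (minv h)"

lemma conjm_minv_conjm: "mdet h = 1 \<Longrightarrow> conjm (minv h) (conjm h g) = g"
  by (simp add: conjm_def mmul_assoc minv_mmul_cancel flip: mmul_assoc[of "minv h" h])

lemma conjm_conjm_minv: "mdet h = 1 \<Longrightarrow> conjm h (conjm (minv h) g) = g"
  by (simp add: conjm_def mmul_assoc mmul_minv_cancel flip: mmul_assoc[of h "minv h"])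

lemma conjm_mmul: "mdet h = 1 \<Longrightarrow> conjm h (mmul g g') = mmul (conjm h g) (conjm h g')"
  by (simp add: conjm_def mmul_assoc minv_mmul_cancel flip: mmul_assoc[of "minv h" h])

lemma conjm_minv: "conjm h (minv g) = minv (conjm h g)"
  by (simp add: conjm_def minv_mmul mmul_assoc)

lemma conjm_mid: "mdet h = 1 \<Longrightarrow> conjm h mid = mid"
  by (simp add: conjm_def mmul_minv_cancel)

lemma conjm_mneg: "conjm h (mneg g) = mneg (conjm h g)"
  by (cases h; cases g) (simp add: conjm_def mat2_simps algebra_simps)

lemma mdet_conjm: "mdet h = 1 \<Longrightarrow> mdet (conjm h g) = mdet g"
  by (simp add: conjm_def mdet_mmul mdet_minv)

lemma psl_subgroup_conjm:
  assumes G: "psl_subgroup G" and "mdet h = 1"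
  shows "psl_subgroup (conjm h ` G)"
  unfolding psl_subgroup_def
proof (intro conjI ballI)
  show "mid \<in> conjm h ` G" "mneg mid \<in> conjm h ` G"
    using G \<open>mdet h = 1\<close> conjm_mid conjm_mneg unfolding psl_subgroup_def by (metis image_eqI)+
next
  fix x y
  assume "x \<in> conjm h ` G" "y \<in> conjm h ` G"
  then obtain g g' where "g \<in> G" "x = conjm h g" "g' \<in> G" "y = conjm h g'"
    by blast
  then show "mdet x = 1" "minv x \<in> conjm h ` G" "mmul x y \<in> conjm h ` G"
    using G \<open>mdet h = 1\<close> psl_subgroup_minv psl_subgroup_mmul
    by (simp_all add: mdet_conjm psl_subgroup_mdet image_eqI flip: conjm_minv conjm_mmul)
qed

lemma continuous_on_conjm: "continuous_on UNIV (conjm h)"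
  unfolding conjm_def continuous_on_eq_continuous_within by (intro ballI continuous_intros)

lemma fuchsian_conjm:
  assumes G: "fuchsian G" and "mdet h = 1"
  shows "fuchsian (conjm h ` G)"
  unfolding fuchsian_def
proof (intro conjI ballI)
  show "psl_subgroup (conjm h ` G)"
    using G \<open>mdet h = 1\<close> psl_subgroup_conjm fuchsian_def by blast
next
  fix x
  assume "x \<in> conjm h ` G"
  then obtain g where g: "g \<in> G" "x = conjm h g"
    by blast
  then obtain U where U: "open U" "U \<inter> G = {g}"
    using G unfolding fuchsian_def isolated_in_def by blast
  have "conjm (minv h) -` U \<inter> conjm h ` G = conjm h ` (U \<inter> G)"
    using conjm_minv_conjm[OF \<open>mdet h = 1\<close>] by (auto simp del: split_paired_All)
  then have "conjm (minv h) -` U \<inter> conjm h ` G = {x}"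
    using U g by simp
  moreover have "open (conjm (minv h) -` U)"
    using U(1) continuous_on_conjm by (rule open_vimage)
  ultimately show "x isolated_in conjm h ` G"
    using g unfolding isolated_in_def by blast
qed

section \<open>Real sets invariant under \<open>s \<mapsto> 1 / (\<tau> - s)\<close>\<close>

lemma no_uniform_increase:
  fixes T :: "real set"
  assumes "s0 \<in> T" "\<forall>s\<in>T. s \<le> B" "0 < \<delta>" "\<forall>s\<in>T. f s \<in> T \<and> s + \<delta> \<le> f s"
  shows False
proof -
  have "T \<noteq> {}" and bdd: "bdd_above T"
    using assms(1,2) by (auto intro: bdd_aboveI)
  then obtain s where s: "s \<in> T" "Sup T - \<delta> < s"
    using less_cSup_iff[of T "Sup T - \<delta>"] assms(3) by auto
  then have "f s \<le> Sup T"
    using cSup_upper[OF _ bdd] assms(4) by blast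
  with s show False
    using assms(4) by fastforce
qed

lemma no_uniform_decrease:
  fixes T :: "real set"
  assumes "s0 \<in> T" "\<forall>s\<in>T. B \<le> s" "0 < \<delta>" "\<forall>s\<in>T. f s \<in> T \<and> f s \<le> s - \<delta>"
  shows False
proof -
  have "T \<noteq> {}" and bdd: "bdd_below T"
    using assms(1,2) by (auto intro: bdd_belowI)
  then obtain s where s: "s \<in> T" "s < Inf T + \<delta>"
    using cInf_less_iff[of T "Inf T + \<delta>"] assms(3) by auto
  then have "Inf T \<le> f s"
    using cInf_lower[OF _ bdd] assms(4) by blast
  with s show False
    using assms(4) by fastforce
qed

lemma reciprocal_shift_bound:
  fixes \<tau> :: real
  assumes ge1: "\<forall>s\<in>T. 1 \<le> \<bar>s\<bar>" and cl: "\<forall>s\<in>T. s \<noteq> \<tau> \<and> 1 / (\<tau> - s) \<in> T"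
    and "s \<in> T"
  shows "\<bar>\<tau> - s\<bar> \<le> 1"
proof -
  have "1 / (\<tau> - s) \<in> T" and "0 < \<bar>\<tau> - s\<bar>"
    using cl \<open>s \<in> T\<close> by auto
  then have "1 \<le> 1 / \<bar>\<tau> - s\<bar>"
    using ge1 by (metis abs_divide abs_one)
  with \<open>0 < \<bar>\<tau> - s\<bar>\<close> show ?thesis
    by (simp add: le_divide_eq)
qed

lemma reciprocal_shift_bounds_pos:
  fixes \<tau> :: real
  assumes "0 < \<tau>" and ge1: "\<forall>s\<in>T. 1 \<le> \<bar>s\<bar>" and cl: "\<forall>s\<in>T. s \<noteq> \<tau> \<and> 1 / (\<tau> - s) \<in> T"
    and "s \<in> T"
  shows "1 \<le> s \<and> \<tau>/2 \<le> s \<and> 0 < \<tau> - s \<and> \<tau> - s \<le> 1"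
proof -
  have one_le: "1 \<le> s'" if "s' \<in> T" for s'
    using reciprocal_shift_bound[OF ge1 cl that] ge1 that \<open>0 < \<tau>\<close> by fastforce
  then have "0 < 1 / (\<tau> - s)"
    using cl \<open>s \<in> T\<close> by (meson less_le_trans zero_less_one)
  then show ?thesis
    using one_le[OF \<open>s \<in> T\<close>] reciprocal_shift_bound[OF ge1 cl \<open>s \<in> T\<close>] by simp
qed

lemma reciprocal_shift_step:
  fixes \<tau> s s0 :: real
  assumes "\<tau>/2 \<le> s0" "\<tau>/2 \<le> s" "0 < \<tau> - s" "\<tau> - s \<le> 1"
  shows "s0 \<le> s \<Longrightarrow> 0 < s0\<^sup>2 - \<tau> * s0 + 1 \<Longrightarrow> s + (s0\<^sup>2 - \<tau> * s0 + 1) \<le> 1 / (\<tau> - s)"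
    and "s \<le> s0 \<Longrightarrow> s0\<^sup>2 - \<tau> * s0 + 1 < 0 \<Longrightarrow> 1 / (\<tau> - s) \<le> s + (s0\<^sup>2 - \<tau> * s0 + 1)"
proof -
  define q where "q x = x\<^sup>2 - \<tau> * x + 1" for x
  have shift: "1 / (\<tau> - s) - s = q s / (\<tau> - s)"
    using assms(3) by (simp add: q_def field_simps power2_eq_square)
  have q_diff: "q s - q s0 = (s - s0) * (s + s0 - \<tau>)"
    by (simp add: q_def power2_eq_square algebra_simps)
  have "0 \<le> s + s0 - \<tau>"
    using assms(1,2) by simp
  show "s + q s0 \<le> 1 / (\<tau> - s)" if "s0 \<le> s" "0 < q s0"
  proof -
    have "0 \<le> (s - s0) * (s + s0 - \<tau>)"
      using \<open>0 \<le> s + s0 - \<tau>\<close> that(1) by simp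
    then have "q s0 \<le> q s"
      using q_diff by linarith
    then have "q s \<le> q s / (\<tau> - s)"
      using assms(3,4) that(2) by (simp add: le_divide_eq mult_left_le)
    with \<open>q s0 \<le> q s\<close> show ?thesis
      using shift by simp
  qed
  show "1 / (\<tau> - s) \<le> s + q s0" if "s \<le> s0" "q s0 < 0"
  proof -
    have "(s - s0) * (s + s0 - \<tau>) \<le> 0"
      using \<open>0 \<le> s + s0 - \<tau>\<close> that(1) by (simp add: mult_nonpos_nonneg)
    then have "q s \<le> q s0"
      using q_diff by linarith
    then have "q s / (\<tau> - s) \<le> q s"
      using assms(3,4) that(2) by (simp add: divide_le_eq mult_le_cancel_left1)
    with \<open>q s \<le> q s0\<close> show ?thesis
      using shift by simp
  qed
qed

lemma reciprocal_shift_invariant_pos: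
  fixes \<tau> :: real
  assumes "0 < \<tau>" and ge1: "\<forall>s\<in>T. 1 \<le> \<bar>s\<bar>" and cl: "\<forall>s\<in>T. s \<noteq> \<tau> \<and> 1 / (\<tau> - s) \<in> T"
    and "s1 \<in> T" "s2 \<in> T" "s1 \<noteq> s2"
  shows False
proof -
  \<comment> \<open>A step moves \<open>s\<close> by \<open>q s / (\<tau> - s)\<close>, and \<open>q\<close> is increasing on \<open>T\<close>; starting where
    \<open>q \<noteq> 0\<close>, the iterates leave \<open>T\<close> upwards or downwards by steps of at least \<open>\<bar>q s0\<bar>\<close>.\<close>
  define q where "q s = s\<^sup>2 - \<tau> * s + 1" for s
  note T_bounds = reciprocal_shift_bounds_pos[OF \<open>0 < \<tau>\<close> ge1 cl]
  have "q s1 \<noteq> q s2"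
  proof -
    have "q s1 - q s2 = (s1 - s2) * (s1 + s2 - \<tau>)"
      by (simp add: q_def power2_eq_square algebra_simps)
    moreover have "s1 + s2 - \<tau> \<noteq> 0"
      using T_bounds[OF \<open>s1 \<in> T\<close>] T_bounds[OF \<open>s2 \<in> T\<close>] \<open>s1 \<noteq> s2\<close> by linarith
    ultimately show ?thesis
      using \<open>s1 \<noteq> s2\<close> by auto
  qed
  then obtain s0 where "s0 \<in> T" "q s0 \<noteq> 0"
    using \<open>s1 \<in> T\<close> \<open>s2 \<in> T\<close> by (metis (full_types))
  then have "\<tau>/2 \<le> s0"
    using T_bounds by blast
  note step = reciprocal_shift_step[OF this]
  show False
  proof (cases "0 < q s0")
    case True
    show False
    proof (rule no_uniform_increase)
      show "s0 \<in> {s \<in> T. s0 \<le> s}" "\<forall>s\<in>{s \<in> T. s0 \<le> s}. s \<le> \<tau>" "0 < q s0"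
        using \<open>s0 \<in> T\<close> T_bounds True by (auto simp: less_imp_le)
      show "\<forall>s\<in>{s \<in> T. s0 \<le> s}. 1 / (\<tau> - s) \<in> {s \<in> T. s0 \<le> s} \<and> s + q s0 \<le> 1 / (\<tau> - s)"
        using T_bounds step(1) True cl unfolding q_def by fastforce
    qed
  next
    case False
    then have "q s0 < 0"
      using \<open>q s0 \<noteq> 0\<close> by simp
    show False
    proof (rule no_uniform_decrease)
      show "s0 \<in> {s \<in> T. s \<le> s0}" "\<forall>s\<in>{s \<in> T. s \<le> s0}. 1 \<le> s" "0 < - q s0"
        using \<open>s0 \<in> T\<close> T_bounds \<open>q s0 < 0\<close> by auto
      show "\<forall>s\<in>{s \<in> T. s \<le> s0}. 1 / (\<tau> - s) \<in> {s \<in> T. s \<le> s0} \<and> 1 / (\<tau> - s) \<le> s - - q s0"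
        using T_bounds step(2) \<open>q s0 < 0\<close> cl unfolding q_def by fastforce
    qed
  qed
qed

lemma reciprocal_shift_invariant_set:
  fixes \<tau> :: real
  assumes ge1: "\<forall>s\<in>T. 1 \<le> \<bar>s\<bar>" and cl: "\<forall>s\<in>T. s \<noteq> \<tau> \<and> 1 / (\<tau> - s) \<in> T"
    and "s1 \<in> T" "s2 \<in> T" "s1 \<noteq> s2"
  shows "\<tau> = 0 \<and> T \<subseteq> {-1, 1}"
proof -
  have "\<not> 0 < \<tau>"
    using reciprocal_shift_invariant_pos assms by blast
  moreover have "\<not> 0 < - \<tau>"
  proof
    assume "0 < - \<tau>"
    moreover have "\<forall>s\<in>uminus ` T. 1 \<le> \<bar>s\<bar>"
      using ge1 by auto
    moreover have "\<forall>s\<in>uminus ` T. s \<noteq> - \<tau> \<and> 1 / (- \<tau> - s) \<in> uminus ` T"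
    proof
      fix s
      assume "s \<in> uminus ` T"
      then obtain u where "u \<in> T" "s = - u"
        by blast
      moreover have "1 / (- \<tau> - s) = - (1 / (\<tau> - u))"
        using \<open>s = - u\<close> by (simp add: divide_minus_right[symmetric])
      ultimately show "s \<noteq> - \<tau> \<and> 1 / (- \<tau> - s) \<in> uminus ` T"
        using cl by auto
    qed
    ultimately show False
      using reciprocal_shift_invariant_pos[of "- \<tau>" "uminus ` T" "- s1" "- s2"] assms(3-5) by auto
  qed
  ultimately have "\<tau> = 0"
    by linarith
  moreover have "s \<in> {-1, 1}" if "s \<in> T" for s
    using reciprocal_shift_bound[OF ge1 cl that] ge1 that \<open>\<tau> = 0\<close> by fastforce
  ultimately show ?thesis
    by blast
qed

section \<open>Discrete subgroups of the positive reals\<close>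

lemma discrete_positive_subgroup_gap:
  fixes K :: "real set"
  assumes mult: "\<forall>k\<in>K. \<forall>m\<in>K. k * m \<in> K" and inv: "\<forall>k\<in>K. 1 / k \<in> K"
    and disc: "\<forall>k\<in>K. k \<noteq> 1 \<longrightarrow> \<delta> \<le> \<bar>k - 1\<bar>"
    and "k \<in> K" "m \<in> K" "0 < m" "m < k"
  shows "m * (1 + \<delta>) \<le> k"
proof -
  have "k * (1 / m) \<in> K"
    using mult inv \<open>k \<in> K\<close> \<open>m \<in> K\<close> by blast
  moreover have "1 < k * (1 / m)"
    using \<open>0 < m\<close> \<open>m < k\<close> by simp
  ultimately have "\<delta> \<le> k * (1 / m) - 1"
    using disc by fastforce
  then show ?thesis
    using \<open>0 < m\<close> by (simp add: field_simps)
qed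

lemma discrete_positive_subgroup_least:
  fixes K :: "real set"
  assumes pos: "\<forall>k\<in>K. 0 < k" and mult: "\<forall>k\<in>K. \<forall>m\<in>K. k * m \<in> K"
    and inv: "\<forall>k\<in>K. 1 / k \<in> K"
    and "0 < \<delta>" and disc: "\<forall>k\<in>K. k \<noteq> 1 \<longrightarrow> \<delta> \<le> \<bar>k - 1\<bar>"
    and "k0 \<in> K" "k0 \<noteq> 1"
  obtains \<mu> where "1 < \<mu>" "\<mu> \<in> K" "\<forall>k\<in>K. 1 < k \<longrightarrow> \<mu> \<le> k"
proof -
  define P where "P = {k \<in> K. 1 < k}"
  have "P \<noteq> {}"
  proof (cases "1 < k0")
    case False
    then have "1 < 1 / k0"
      using pos \<open>k0 \<in> K\<close> \<open>k0 \<noteq> 1\<close> by (simp add: less_divide_eq)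
    then show ?thesis
      using inv \<open>k0 \<in> K\<close> unfolding P_def by blast
  qed (use \<open>k0 \<in> K\<close> P_def in blast)
  have bdd: "bdd_below P"
    unfolding P_def by (rule bdd_belowI[of _ 1]) simp
  define \<mu> where "\<mu> = Inf P"
  have "1 \<le> \<mu>"
    unfolding \<mu>_def using \<open>P \<noteq> {}\<close> by (rule cInf_greatest) (simp add: P_def)
  have "\<mu> \<in> P"
  proof (rule ccontr)
    assume "\<mu> \<notin> P"
    have "\<mu> < \<mu> * (1 + \<delta>)"
      using \<open>1 \<le> \<mu>\<close> \<open>0 < \<delta>\<close> by simp
    then obtain k1 where k1: "k1 \<in> P" "k1 < \<mu> * (1 + \<delta>)"
      using cInf_less_iff[OF \<open>P \<noteq> {}\<close> bdd] unfolding \<mu>_def by blast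
    then have "\<mu> < k1"
      using cInf_lower[OF k1(1) bdd] \<open>\<mu> \<notin> P\<close> unfolding \<mu>_def by (auto simp: le_less)
    then obtain k2 where k2: "k2 \<in> P" "k2 < k1"
      using cInf_less_iff[OF \<open>P \<noteq> {}\<close> bdd] unfolding \<mu>_def by blast
    then have "\<mu> < k2"
      using cInf_lower[OF k2(1) bdd] \<open>\<mu> \<notin> P\<close> unfolding \<mu>_def by (auto simp: le_less)
    have "k2 * (1 + \<delta>) \<le> k1"
      using discrete_positive_subgroup_gap[OF mult inv disc] k1(1) k2 \<open>\<mu> < k2\<close> \<open>1 \<le> \<mu>\<close>
      unfolding P_def by simp
    with k1(2) \<open>\<mu> < k2\<close> \<open>0 < \<delta>\<close> show False
      by (smt (verit) mult_strict_right_mono)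
  qed
  then show ?thesis
    using that cInf_lower[OF _ bdd] unfolding P_def \<mu>_def by blast
qed

lemma mem_powers_of_least:
  fixes K :: "real set"
  assumes mult: "\<forall>k\<in>K. \<forall>m\<in>K. k * m \<in> K" and inv: "\<forall>k\<in>K. 1 / k \<in> K"
    and "1 < \<mu>" "\<mu> \<in> K" and least: "\<forall>k\<in>K. 1 < k \<longrightarrow> \<mu> \<le> k"
    and "k \<in> K" "1 \<le> k"
  shows "\<exists>n. k = \<mu> ^ n"
proof -
  obtain N where "k < \<mu> ^ N"
    using real_arch_pow[OF \<open>1 < \<mu>\<close>] by blast
  with \<open>k \<in> K\<close> \<open>1 \<le> k\<close> show ?thesis
  proof (induction N arbitrary: k)
    case 0
    then show ?case
      by simp
  next
    case (Suc N)
    show ?case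
    proof (cases "k < \<mu>")
      case True
      then have "\<not> 1 < k"
        using least Suc.prems(1) by (meson not_le)
      then have "k = \<mu> ^ 0"
        using Suc.prems(2) by simp
      then show ?thesis ..
    next
      case False
      have "k * (1 / \<mu>) \<in> K"
        using mult inv Suc.prems(1) \<open>\<mu> \<in> K\<close> by blast
      moreover have "1 \<le> k * (1 / \<mu>)" "k * (1 / \<mu>) < \<mu> ^ N"
        using False Suc.prems(3) \<open>1 < \<mu>\<close> by (simp_all add: field_simps)
      ultimately obtain n where "k * (1 / \<mu>) = \<mu> ^ n"
        using Suc.IH by blast
      then have "k = \<mu> ^ Suc n"
        using \<open>1 < \<mu>\<close> by (simp add: field_simps)
      then show ?thesis ..
    qed
  qed
qed

lemma discrete_positive_subgroup_cyclic:
  fixes K :: "real set"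
  assumes pos: "\<forall>k\<in>K. 0 < k" and mult: "\<forall>k\<in>K. \<forall>m\<in>K. k * m \<in> K"
    and inv: "\<forall>k\<in>K. 1 / k \<in> K"
    and "0 < \<delta>" and disc: "\<forall>k\<in>K. k \<noteq> 1 \<longrightarrow> \<delta> \<le> \<bar>k - 1\<bar>"
    and "k0 \<in> K" "k0 \<noteq> 1"
  obtains \<mu> where "1 < \<mu>" "\<mu> \<in> K" "\<forall>k\<in>K. \<exists>n. k = \<mu> ^ n \<or> k = 1 / \<mu> ^ n"
proof -
  obtain \<mu> where "1 < \<mu>" "\<mu> \<in> K" and least: "\<forall>k\<in>K. 1 < k \<longrightarrow> \<mu> \<le> k"
    using discrete_positive_subgroup_least[OF assms] by blast
  note power = mem_powers_of_least[OF mult inv \<open>1 < \<mu>\<close> \<open>\<mu> \<in> K\<close> least]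
  have "\<exists>n. k = \<mu> ^ n \<or> k = 1 / \<mu> ^ n" if k: "k \<in> K" for k
  proof (cases "1 \<le> k")
    case False
    then have "1 \<le> 1 / k"
      using pos k by (simp add: le_divide_eq)
    then obtain n where "1 / k = \<mu> ^ n"
      using power[of "1 / k"] inv k by blast
    then have "k = 1 / \<mu> ^ n"
      by (metis inverse_eq_divide inverse_inverse_eq)
    then show ?thesis
      by blast
  qed (use power k in blast)
  then show ?thesis
    using that \<open>1 < \<mu>\<close> \<open>\<mu> \<in> K\<close> by blast
qed

section \<open>Groups preserving \<open>{0, \<infinity>}\<close>\<close>

text \<open>\<open>dilation k\<close> acts as \<open>z \<mapsto> k\<^sup>2 z\<close>.\<close>

definition dilation :: "real \<Rightarrow> mat2" where
  "dilation k = (k, 0, 0, 1 / k)"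

definition neg_recip :: mat2 where
  "neg_recip = (0, -1, 1, 0)"

lemma mdet_neg_recip: "mdet neg_recip = 1"
  by (simp add: neg_recip_def mdet_simp)

lemma mmul_dilation: "mmul (dilation k) (dilation m) = dilation (k * m)"
  by (simp add: dilation_def mmul_simp)

lemma minv_dilation: "minv (dilation k) = dilation (1 / k)"
  by (simp add: dilation_def minv_simp)

lemma mneg_dilation: "mneg (dilation k) = dilation (- k)"
  by (simp add: dilation_def mneg_simp)

lemma dilation_one [simp]: "dilation 1 = mid"
  by (simp add: dilation_def mid_def)

lemma dilation_eq_mid_iff: "dilation k = mid \<longleftrightarrow> k = 1"
  by (auto simp: dilation_def mid_def)

lemma mdet_dilation_eq_1_iff: "mdet (dilation k) = 1 \<longleftrightarrow> k \<noteq> 0"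
  by (simp add: dilation_def mdet_simp)

lemma dilation_power_mem:
  assumes "psl_subgroup H" "dilation \<mu> \<in> H"
  shows "dilation (\<mu> ^ n) \<in> H"
proof (induction n)
  case 0
  then show ?case
    using psl_subgroup_mid[OF assms(1)] by simp
next
  case (Suc n)
  then show ?case
    using psl_subgroup_mmul[OF assms(1,2) Suc] by (simp add: mmul_dilation)
qed

lemma zero_infty_stabilizer_cases:
  assumes "mdet M = 1"
    and "ext_act M (Fin 0) \<in> {Fin 0, Infty}" and "ext_act M Infty \<in> {Fin 0, Infty}"
  shows "(\<exists>k. M = dilation k) \<or> (\<exists>k. M = mmul neg_recip (dilation k))"
proof -
  obtain a b c d where M: "M = (a, b, c, d)"
    by (cases M)
  have det: "a*d - b*c = 1"
    using assms(1) M by (simp add: mdet_simp)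
  have "c = 0 \<or> a = 0" and "d = 0 \<or> b = 0"
    using assms(2,3) by (auto simp: M ext_act_simps split: if_splits)
  show ?thesis
  proof (cases "c = 0")
    case True
    with det \<open>d = 0 \<or> b = 0\<close> have "b = 0" "a * d = 1"
      by auto
    then have "d = 1 / a"
      by (auto simp: eq_divide_eq mult.commute)
    with True \<open>b = 0\<close> have "M = dilation a"
      by (simp add: M dilation_def)
    then show ?thesis
      by blast
  next
    case False
    with det \<open>c = 0 \<or> a = 0\<close> \<open>d = 0 \<or> b = 0\<close> have "a = 0" "d = 0" "b = - 1 / c"
      by (auto simp: field_simps)
    then have "M = mmul neg_recip (dilation c)"
      by (simp add: M dilation_def neg_recip_def mmul_simp)
    then show ?thesis
      by blast
  qed
qed

lemma dilation_discrete:
  assumes "fuchsian G"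
  obtains \<delta> where "0 < \<delta>" "\<And>k. dilation k \<in> G \<Longrightarrow> k \<noteq> 1 \<Longrightarrow> \<delta> \<le> \<bar>k - 1\<bar>"
proof -
  have "mid isolated_in G"
    using assms psl_subgroup_mid unfolding fuchsian_def by blast
  then obtain U where U: "open U" "U \<inter> G = {mid}"
    unfolding isolated_in_def by blast
  have "isCont dilation 1"
    unfolding dilation_def by (intro continuous_intros) auto
  then have "eventually (\<lambda>k. dilation k \<in> U) (at 1)"
    using U dilation_eq_mid_iff by (auto simp: isCont_def intro!: topological_tendstoD)
  then obtain \<delta> where "0 < \<delta>" and \<delta>: "\<And>k. k \<noteq> 1 \<Longrightarrow> dist k 1 < \<delta> \<Longrightarrow> dilation k \<in> U"
    unfolding eventually_at by auto
  show ?thesis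
  proof (rule that[OF \<open>0 < \<delta>\<close>])
    fix k
    assume "dilation k \<in> G" "k \<noteq> 1"
    then have "dilation k \<notin> U"
      using U(2) dilation_eq_mid_iff by blast
    then show "\<delta> \<le> \<bar>k - 1\<bar>"
      using \<delta> \<open>k \<noteq> 1\<close> by (force simp: dist_real_def)
  qed
qed

lemma gen_group_subset:
  assumes "psl_subgroup G" "X \<subseteq> G"
  shows "gen_group X \<subseteq> G"
proof
  fix x
  assume "x \<in> gen_group X"
  then show "x \<in> G"
    by induction (use assms in \<open>auto simp: psl_subgroup_def\<close>)
qed

lemma psl_subgroup_gen_group:
  assumes "\<forall>x\<in>X. mdet x = 1" "mneg mid \<in> X"
  shows "psl_subgroup (gen_group X)"
proof -
  have "mdet x = 1" if "x \<in> gen_group X" for x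
    using that by induction (use assms in \<open>auto simp: mid_def mdet_simp mdet_mmul mdet_minv\<close>)
  then show ?thesis
    using assms(2) unfolding psl_subgroup_def by (auto intro: gen_group.intros)
qed

lemma special_group_eq_gen_group:
  assumes "0 < \<mu>"
  shows "special_group (\<mu>\<^sup>2) = gen_group {neg_recip, dilation \<mu>, mneg mid}"
  using assms by (simp add: special_group_def neg_recip_def dilation_def)

definition dilation_factors :: "mat2 set \<Rightarrow> real set" where
  "dilation_factors G = {k. 0 < k \<and> dilation k \<in> G}"

lemma dilation_factors_mult:
  "psl_subgroup G \<Longrightarrow> k \<in> dilation_factors G \<Longrightarrow> m \<in> dilation_factors G \<Longrightarrow> k * m \<in> dilation_factors G"
  using psl_subgroup_mmul[of G "dilation k" "dilation m"] by (simp add: dilation_factors_def mmul_dilation)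

lemma dilation_factors_inverse:
  "psl_subgroup G \<Longrightarrow> k \<in> dilation_factors G \<Longrightarrow> 1 / k \<in> dilation_factors G"
  using psl_subgroup_minv[of G "dilation k"] by (simp add: dilation_factors_def minv_dilation)

lemma abs_mem_dilation_factors:
  assumes H: "psl_subgroup G" and "dilation k \<in> G"
  shows "k \<noteq> 0 \<and> \<bar>k\<bar> \<in> dilation_factors G"
proof -
  have "k \<noteq> 0"
    using psl_subgroup_mdet[OF H \<open>dilation k \<in> G\<close>] mdet_dilation_eq_1_iff by blast
  moreover have "dilation \<bar>k\<bar> \<in> G"
    using assms psl_subgroup_mneg[OF assms] mneg_dilation by (cases "0 \<le> k") auto
  ultimately show ?thesis
    by (simp add: dilation_factors_def)
qed

lemma dilation_mem_of_flip:
  assumes H: "psl_subgroup G" and "neg_recip \<in> G" "mmul neg_recip (dilation k) \<in> G"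
  shows "dilation k \<in> G"
proof -
  have "mmul (minv neg_recip) (mmul neg_recip (dilation k)) = dilation k"
    by (simp add: minv_mmul_cancel mdet_neg_recip flip: mmul_assoc)
  then show ?thesis
    using psl_subgroup_mmul[OF H psl_subgroup_minv[OF H \<open>neg_recip \<in> G\<close>] assms(3)] by simp
qed

lemma dilation_mem_of_power:
  assumes S: "psl_subgroup S" and "dilation \<mu> \<in> S" and "\<bar>k\<bar> = \<mu> ^ n \<or> \<bar>k\<bar> = 1 / \<mu> ^ n"
  shows "dilation k \<in> S"
proof -
  have "dilation \<bar>k\<bar> \<in> S"
    using assms(3) dilation_power_mem[OF assms(1,2), of n] psl_subgroup_minv[OF S, of "dilation (\<mu> ^ n)"]
    by (auto simp: minv_dilation)
  then show ?thesis
    using psl_subgroup_mneg[OF S, of "dilation \<bar>k\<bar>"] mneg_dilation by (cases "0 \<le> k") auto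
qed

lemma infinite_imp_nontrivial_dilation_factor:
  assumes H: "psl_subgroup G" and "neg_recip \<in> G" and "infinite G"
    and shape: "\<forall>M\<in>G. (\<exists>k. M = dilation k) \<or> (\<exists>k. M = mmul neg_recip (dilation k))"
  shows "\<exists>k0\<in>dilation_factors G. k0 \<noteq> 1"
proof (rule ccontr)
  assume "\<not> (\<exists>k0\<in>dilation_factors G. k0 \<noteq> 1)"
  then have "\<bar>k\<bar> = 1" if "dilation k \<in> G" for k
    using abs_mem_dilation_factors[OF H that] by blast
  then have "G \<subseteq> dilation ` {-1, 1} \<union> (\<lambda>k. mmul neg_recip (dilation k)) ` {-1, 1}"
    using shape dilation_mem_of_flip[OF H \<open>neg_recip \<in> G\<close>] by (fastforce simp: abs_if split: if_splits)
  then show False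
    using \<open>infinite G\<close> finite_subset by blast
qed

lemma fuchsian_dilation_group_eq_special_group:
  assumes G: "fuchsian G" and "neg_recip \<in> G" and "infinite G"
    and shape: "\<forall>M\<in>G. (\<exists>k. M = dilation k) \<or> (\<exists>k. M = mmul neg_recip (dilation k))"
  obtains \<mu> where "1 < \<mu>" "G = special_group (\<mu>\<^sup>2)"
proof -
  have H: "psl_subgroup G"
    using G fuchsian_def by blast
  obtain k0 where "k0 \<in> dilation_factors G" "k0 \<noteq> 1"
    using infinite_imp_nontrivial_dilation_factor[OF H assms(2-4)] by blast
  obtain \<delta> where "0 < \<delta>" and disc: "\<forall>k\<in>dilation_factors G. k \<noteq> 1 \<longrightarrow> \<delta> \<le> \<bar>k - 1\<bar>"
    using dilation_discrete[OF G] by (metis (mono_tags) dilation_factors_def mem_Collect_eq)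
  obtain \<mu> where "1 < \<mu>" "\<mu> \<in> dilation_factors G"
    and powers: "\<forall>k\<in>dilation_factors G. \<exists>n. k = \<mu> ^ n \<or> k = 1 / \<mu> ^ n"
    using discrete_positive_subgroup_cyclic[OF _ _ _ \<open>0 < \<delta>\<close> disc \<open>k0 \<in> dilation_factors G\<close> \<open>k0 \<noteq> 1\<close>]
      dilation_factors_mult[OF H] dilation_factors_inverse[OF H]
    by (auto simp: dilation_factors_def)
  define S where "S = gen_group {neg_recip, dilation \<mu>, mneg mid}"
  have S: "psl_subgroup S"
    unfolding S_def using \<open>1 < \<mu>\<close> mdet_neg_recip mdet_dilation_eq_1_iff
    by (intro psl_subgroup_gen_group) (auto simp: mid_def mat2_simps)
  have "neg_recip \<in> S" "dilation \<mu> \<in> S"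
    unfolding S_def by (simp_all add: gen_group.gen_base)
  have "dilation k \<in> S" if "dilation k \<in> G" for k
    using powers abs_mem_dilation_factors[OF H that] dilation_mem_of_power[OF S \<open>dilation \<mu> \<in> S\<close>]
    by blast
  then have "G \<subseteq> S"
    using shape dilation_mem_of_flip[OF H \<open>neg_recip \<in> G\<close>] psl_subgroup_mmul[OF S \<open>neg_recip \<in> S\<close>]
    by (metis (no_types, lifting) subsetI)
  moreover have "S \<subseteq> G"
    unfolding S_def using H \<open>neg_recip \<in> G\<close> \<open>\<mu> \<in> dilation_factors G\<close>
    by (intro gen_group_subset) (auto simp: dilation_factors_def psl_subgroup_def)
  ultimately have "G = special_group (\<mu>\<^sup>2)"
    using special_group_eq_gen_group \<open>1 < \<mu>\<close> S_def by simp
  then show ?thesis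
    using that \<open>1 < \<mu>\<close> by blast
qed

section \<open>Limit sets avoiding an isometric sphere\<close>

lemma trace_zero_conjugate_neg_recip:
  assumes det: "mdet (a, b, c, d) = 1" and "a + d = 0" "0 < c"
  obtains h where "mdet h = 1" "conjm (minv h) (a, b, c, d) = neg_recip"
    "ext_act h (Fin 0) = Fin ((-1 - d) / c)" "ext_act h Infty = Fin ((1 - d) / c)"
proof -
  \<comment> \<open>The matrix interchanges \<open>p\<close> and \<open>q\<close>; \<open>h\<close> has columns proportional to \<open>(q, 1)\<close> and \<open>(p, 1)\<close>.\<close>
  define p q where "p = (-1 - d) / c" and "q = (1 - d) / c"
  define u where "u = sqrt (c / 2)"
  define h where "h = (q * u, p * u, u, u)"
  have "0 < u" "u * u = c / 2"
    using \<open>0 < c\<close> by (simp_all add: u_def)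
  have "mdet h = (q - p) * (u * u)"
    by (simp add: h_def mdet_simp algebra_simps)
  then have "mdet h = 1"
    using \<open>u * u = c / 2\<close> \<open>0 < c\<close> by (simp add: p_def q_def field_simps)
  have "a = - d"
    using \<open>a + d = 0\<close> by simp
  then have "b * c = - 1 - d * d"
    using det by (simp add: mdet_simp algebra_simps)
  then have "a * q + b = p" "a * p + b = - q" "c * q + d = 1" "c * p + d = - 1"
    using \<open>a = - d\<close> \<open>0 < c\<close> by (simp_all add: p_def q_def field_simps)
  moreover have "mmul (a, b, c, d) h = ((a*q + b) * u, (a*p + b) * u, (c*q + d) * u, (c*p + d) * u)"
    by (simp add: h_def mmul_simp algebra_simps)
  ultimately have "mmul (a, b, c, d) h = mmul h neg_recip"
    by (simp add: h_def neg_recip_def mmul_simp)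
  then have "conjm (minv h) (a, b, c, d) = neg_recip"
    using \<open>mdet h = 1\<close>
    by (simp add: conjm_def mmul_assoc minv_mmul_cancel flip: mmul_assoc[of "minv h" h])
  moreover have "ext_act h (Fin 0) = Fin p" "ext_act h Infty = Fin q"
    using \<open>0 < u\<close> by (simp_all add: h_def ext_act_simps)
  ultimately show ?thesis
    using that \<open>mdet h = 1\<close> p_def q_def by blast
qed

lemma two_point_limit_set_conjugate_special_group:
  assumes F: "fuchsian \<Gamma>" and "mdet h = 1" and "g \<in> \<Gamma>" "conjm (minv h) g = neg_recip"
    and L: "limit_set \<Gamma> = {ext_act h (Fin 0), ext_act h Infty}"
  shows "\<exists>lam>1. psl_conjugate \<Gamma> (special_group lam)"
proof -
  have H: "psl_subgroup \<Gamma>"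
    using F fuchsian_def by blast
  define G where "G = conjm (minv h) ` \<Gamma>"
  have "fuchsian G"
    unfolding G_def using F \<open>mdet h = 1\<close> by (simp add: fuchsian_conjm mdet_minv)
  have "neg_recip \<in> G"
    unfolding G_def using \<open>g \<in> \<Gamma>\<close> \<open>conjm (minv h) g = neg_recip\<close> by (metis image_eqI)
  have \<Gamma>_eq: "\<Gamma> = conjm h ` G"
    unfolding G_def image_image using conjm_conjm_minv[OF \<open>mdet h = 1\<close>] by simp
  have "infinite G"
    using L limit_set_finite_group \<Gamma>_eq by (metis empty_iff finite_imageI insertI1)
  have minv_h: "ext_act (minv h) (ext_act h p) = p" for p
    using ext_act_mmul[of h "minv h" p] \<open>mdet h = 1\<close> minv_mmul_cancel by simp
  have "ext_act M p \<in> {Fin 0, Infty}" if "M \<in> G" "p \<in> {Fin 0, Infty}" for M p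
  proof -
    obtain \<gamma> where "\<gamma> \<in> \<Gamma>" "M = conjm (minv h) \<gamma>"
      using \<open>M \<in> G\<close> unfolding G_def by blast
    then have "M = mmul (mmul (minv h) \<gamma>) h"
      by (simp add: conjm_def)
    then have "ext_act M p = ext_act (minv h) (ext_act \<gamma> (ext_act h p))"
      using \<open>mdet h = 1\<close> psl_subgroup_mdet[OF H \<open>\<gamma> \<in> \<Gamma>\<close>] by (simp add: ext_act_mmul)
    moreover have "ext_act \<gamma> (ext_act h p) \<in> {ext_act h (Fin 0), ext_act h Infty}"
      using limit_set_invariant[OF H \<open>\<gamma> \<in> \<Gamma>\<close>] L that(2) by auto
    ultimately show ?thesis
      using minv_h by auto
  qed
  then have "\<forall>M\<in>G. (\<exists>k. M = dilation k) \<or> (\<exists>k. M = mmul neg_recip (dilation k))"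
    using \<open>fuchsian G\<close> psl_subgroup_mdet unfolding fuchsian_def
    by (intro ballI zero_infty_stabilizer_cases) auto
  then obtain \<mu> where "1 < \<mu>" "G = special_group (\<mu>\<^sup>2)"
    using fuchsian_dilation_group_eq_special_group \<open>fuchsian G\<close> \<open>neg_recip \<in> G\<close> \<open>infinite G\<close> by blast
  moreover have "1 < \<mu>\<^sup>2"
    using \<open>1 < \<mu>\<close> by (simp add: one_less_power)
  ultimately show ?thesis
    using \<Gamma>_eq \<open>mdet h = 1\<close> unfolding psl_conjugate_def conjm_def by blast
qed

lemma W_int_iff:
  assumes "c \<noteq> 0"
  shows "x \<in> W_int (a, b, c, d) \<longleftrightarrow> \<bar>c*x + d\<bar> < 1"
proof -
  have "x \<in> W_int (a, b, c, d) \<longleftrightarrow> \<bar>x + d / c\<bar> < 1 / \<bar>c\<bar>"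
    by (auto simp: W_int_def entry_simps abs_less_iff)
  also have "\<dots> \<longleftrightarrow> \<bar>c\<bar> * \<bar>x + d / c\<bar> < 1"
    using assms by (simp add: less_divide_eq mult.commute)
  also have "\<bar>c\<bar> * \<bar>x + d / c\<bar> = \<bar>c*x + d\<bar>"
    using assms by (simp add: abs_mult[symmetric] algebra_simps)
  finally show ?thesis .
qed

lemma W_int_mneg: "W_int (mneg g) = W_int g"
  by (cases g) (simp add: W_int_def mneg_simp entry_simps)

lemma limit_set_avoiding_W_int:
  assumes H: "psl_subgroup \<Gamma>" and g: "(a, b, c, d) \<in> \<Gamma>" and "c \<noteq> 0"
    and avoid: "\<forall>x\<in>W_int (a, b, c, d). Fin x \<notin> limit_set \<Gamma>" and "Infty \<notin> limit_set \<Gamma>"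
    and "Fin x1 \<in> limit_set \<Gamma>" "Fin x2 \<in> limit_set \<Gamma>" "x1 \<noteq> x2"
  shows "a + d = 0 \<and> limit_set \<Gamma> \<subseteq> {Fin ((-1 - d) / c), Fin ((1 - d) / c)}"
proof -
  have det: "a*d - b*c = 1"
    using psl_subgroup_mdet[OF H g] by (simp add: mdet_simp)
  have g_inv: "(d, -b, -c, a) \<in> \<Gamma>"
    using psl_subgroup_minv[OF H g] by (simp add: minv_simp)
  \<comment> \<open>In the coordinate \<open>s = c x + d\<close>, \<open>W(g)\<close> is \<open>\<bar>s\<bar> < 1\<close> and \<open>g\<^sup>-\<^sup>1\<close> acts as \<open>s \<mapsto> 1 / (a + d - s)\<close>.\<close>
  define T where "T = {c*x + d | x. Fin x \<in> limit_set \<Gamma>}"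
  have T_ge1: "\<forall>s\<in>T. 1 \<le> \<bar>s\<bar>"
    using avoid \<open>c \<noteq> 0\<close> by (force simp: T_def W_int_iff)
  have T_closed: "\<forall>s\<in>T. s \<noteq> a + d \<and> 1 / ((a + d) - s) \<in> T"
  proof
    fix s
    assume "s \<in> T"
    then obtain x where x: "s = c*x + d" "Fin x \<in> limit_set \<Gamma>"
      by (auto simp: T_def)
    then have "ext_act (d, -b, -c, a) (Fin x) \<in> limit_set \<Gamma>"
      using limit_set_invariant[OF H g_inv] by blast
    then have "-c*x + a \<noteq> 0" and "Fin ((d*x - b) / (-c*x + a)) \<in> limit_set \<Gamma>"
      using \<open>Infty \<notin> limit_set \<Gamma>\<close> by (auto simp: ext_act_simps split: if_splits)
    moreover have "c * ((d*x - b) / (-c*x + a)) + d = 1 / ((a + d) - s)"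
      using \<open>-c*x + a \<noteq> 0\<close> det x(1) by (simp add: field_simps)
    ultimately have "1 / ((a + d) - s) \<in> T"
      unfolding T_def by (metis (mono_tags, lifting) mem_Collect_eq)
    moreover have "s \<noteq> a + d"
      using \<open>-c*x + a \<noteq> 0\<close> x(1) by linarith
    ultimately show "s \<noteq> a + d \<and> 1 / ((a + d) - s) \<in> T"
      by blast
  qed
  have "c*x1 + d \<in> T" "c*x2 + d \<in> T" "c*x1 + d \<noteq> c*x2 + d"
    using assms(6-8) \<open>c \<noteq> 0\<close> by (auto simp: T_def)
  then have "a + d = 0" and "T \<subseteq> {-1, 1}"
    using reciprocal_shift_invariant_set[OF T_ge1 T_closed] by blast+
  moreover have "y \<in> {Fin ((-1 - d) / c), Fin ((1 - d) / c)}" if y: "y \<in> limit_set \<Gamma>" for y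
  proof -
    obtain x where "y = Fin x" "c*x + d \<in> T"
      using y \<open>Infty \<notin> limit_set \<Gamma>\<close> by (cases y) (auto simp: T_def)
    then show ?thesis
      using \<open>T \<subseteq> {-1, 1}\<close> \<open>c \<noteq> 0\<close> by (auto simp: field_simps)
  qed
  ultimately show ?thesis
    by blast
qed

lemma limit_set_meets_W_int:
  assumes F: "fuchsian \<Gamma>" and g: "(a, b, c, d) \<in> \<Gamma>" and "0 < c"
    and not_special: "\<not> (\<exists>lam>1. psl_conjugate \<Gamma> (special_group lam))"
    and two: "\<exists>p q. p \<in> limit_set \<Gamma> \<and> q \<in> limit_set \<Gamma> \<and> p \<noteq> q"
  shows "\<exists>x\<in>W_int (a, b, c, d). Fin x \<in> limit_set \<Gamma>"
proof (rule ccontr)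
  assume avoid: "\<not> ?thesis"
  have H: "psl_subgroup \<Gamma>"
    using F fuchsian_def by blast
  have "Infty \<notin> limit_set \<Gamma>"
  proof
    assume "Infty \<in> limit_set \<Gamma>"
    then have "ext_act (minv (a, b, c, d)) Infty \<in> limit_set \<Gamma>"
      using limit_set_invariant[OF H psl_subgroup_minv[OF H g]] by blast
    moreover have "ext_act (minv (a, b, c, d)) Infty = Fin (- d / c)"
      using \<open>0 < c\<close> by (simp add: minv_simp ext_act_simps)
    moreover have "- d / c \<in> W_int (a, b, c, d)"
      using \<open>0 < c\<close> by (simp add: W_int_iff)
    ultimately show False
      using avoid by auto
  qed
  then obtain x1 x2 where "Fin x1 \<in> limit_set \<Gamma>" "Fin x2 \<in> limit_set \<Gamma>" "x1 \<noteq> x2"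
    using two by (metis extR.exhaust)
  moreover have "\<forall>x\<in>W_int (a, b, c, d). Fin x \<notin> limit_set \<Gamma>"
    using avoid by blast
  ultimately have "a + d = 0" and "limit_set \<Gamma> \<subseteq> {Fin ((-1 - d) / c), Fin ((1 - d) / c)}"
    using limit_set_avoiding_W_int[OF H g _ _ \<open>Infty \<notin> limit_set \<Gamma>\<close>] \<open>0 < c\<close> by auto
  then have "limit_set \<Gamma> = {Fin ((-1 - d) / c), Fin ((1 - d) / c)}"
    using \<open>Fin x1 \<in> limit_set \<Gamma>\<close> \<open>Fin x2 \<in> limit_set \<Gamma>\<close> \<open>x1 \<noteq> x2\<close> by blast
  moreover obtain h where "mdet h = 1" "conjm (minv h) (a, b, c, d) = neg_recip"
    "ext_act h (Fin 0) = Fin ((-1 - d) / c)" "ext_act h Infty = Fin ((1 - d) / c)"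
    using trace_zero_conjugate_neg_recip psl_subgroup_mdet[OF H g] \<open>a + d = 0\<close> \<open>0 < c\<close> by blast
  ultimately have "\<exists>lam>1. psl_conjugate \<Gamma> (special_group lam)"
    using two_point_limit_set_conjugate_special_group[OF F _ g] by simp
  with not_special show False ..
qed

theorem lemma2p2:
  fixes \<Gamma> :: "mat2 set"
  assumes "fuchsian \<Gamma>"
    and "geometrically_finite \<Gamma>"
    and "Infty \<notin> Rst \<Gamma>"
    and "\<not> (\<exists>lam>1. psl_conjugate \<Gamma> (special_group lam))"
    and "\<exists>p q. p \<in> limit_set \<Gamma> \<and> q \<in> limit_set \<Gamma> \<and> p \<noteq> q"
  shows "\<forall>g\<in>\<Gamma>. entry_c g \<noteq> 0 \<longrightarrow> (\<exists>x\<in>W_int g. Fin x \<in> limit_set \<Gamma>)"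
proof (intro ballI impI)
  fix g
  assume "g \<in> \<Gamma>" "entry_c g \<noteq> 0"
  obtain a b c d where g: "g = (a, b, c, d)"
    by (cases g)
  have "mneg g \<in> \<Gamma>"
    using psl_subgroup_mneg \<open>g \<in> \<Gamma>\<close> assms(1) fuchsian_def by blast
  show "\<exists>x\<in>W_int g. Fin x \<in> limit_set \<Gamma>"
  proof (cases "0 < c")
    case True
    then show ?thesis
      using limit_set_meets_W_int[OF assms(1) _ True assms(4,5)] \<open>g \<in> \<Gamma>\<close> g by blast
  next
    case False
    then have "0 < - c"
      using \<open>entry_c g \<noteq> 0\<close> g by (simp add: entry_simps)
    moreover have "(-a, -b, -c, -d) \<in> \<Gamma>"
      using \<open>mneg g \<in> \<Gamma>\<close> g by (simp add: mneg_simp)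
    ultimately have "\<exists>x\<in>W_int (-a, -b, -c, -d). Fin x \<in> limit_set \<Gamma>"
      using limit_set_meets_W_int[OF assms(1) _ _ assms(4,5)] by blast
    then show ?thesis
      using W_int_mneg[of g] g by (simp add: mneg_simp)
  qed
qed

end
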